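(* Let $(\Omega,\mathcal{F},\mathbb{P})$ be a nonatomic probability space, let $u:\mathbb{R}\to\mathbb{R}$ be a finite-valued utility function bounded from above, and let $\alpha\in\mathbb{R}$ be such that $u(x)>\alpha$ for some $x\in\mathbb{R}$. For $1\le p\le\infty$ set $\mathcal{A}_u^p=\{X\in L^p:\mathbb{E}[u(X)]\ge\alpha\}$. (i) For any $1\le p<\infty$, the closure of $\mathcal{A}_u^\infty$ in $L^p$ equals $\mathcal{A}_u^p$. (ii) Let $S=(S_0,S_T)$ be a traded asset with $S_T\in L^\infty$, assume $\rho_{\mathcal{A}_u^\infty,S}$ is finite-valued (hence continuous) on $L^\infty$, and fix $1\le p<\infty$. Then $\rho_{\mathcal{A}_u^\infty,S}$ can be extended to a finite-valued (hence continuous) risk measure on $L^p$ if and only if $\mathcal{A}_u^p$ has nonempty interior in $L^p$. In this case, the extension is unique and is given by $\rho_{\mathcal{A}_u^p,S}$.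
   Context: A utility function is a nonconstant, increasing, concave function. A traded asset is $S=(S_0,S_T)$ with $S_0>0$, $S_T\ge0$ a.s., $S_T\ne0$. For $\mathcal{B}\subset L^p$, $\rho_{\mathcal{B},S}(X)=\inf\{m\in\mathbb{R}:X+\frac{m}{S_0}S_T\in\mathcal{B}\}$ for $X\in L^p$; a risk measure on $L^p$ is a map of this form. *)

theory Defs
  imports "HOL-Probability.Probability"
begin

definition nonatomic :: "'a measure \<Rightarrow> bool" where
  "nonatomic M \<longleftrightarrow> (\<forall>A\<in>sets M. measure M A > 0 \<longrightarrow>
      (\<exists>B\<in>sets M. B \<subseteq> A \<and> 0 < measure M B \<and> measure M B < measure M A))"

definition utility :: "(real \<Rightarrow> real) \<Rightarrow> bool" where
  "utility u \<longleftrightarrow> mono u \<and> concave_on UNIV u \<and> (\<exists>x y. u x \<noteq> u y)"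

definition Lp :: "'a measure \<Rightarrow> real \<Rightarrow> ('a \<Rightarrow> real) set" where
  "Lp M p = {X. X \<in> borel_measurable M \<and> integrable M (\<lambda>\<omega>. \<bar>X \<omega>\<bar> powr p)}"

definition Linf :: "'a measure \<Rightarrow> ('a \<Rightarrow> real) set" where
  "Linf M = {X. X \<in> borel_measurable M \<and> (\<exists>C. AE \<omega> in M. \<bar>X \<omega>\<bar> \<le> C)}"

definition Lp_norm :: "'a measure \<Rightarrow> real \<Rightarrow> ('a \<Rightarrow> real) \<Rightarrow> real" where
  "Lp_norm M p X = (\<integral>\<omega>. \<bar>X \<omega>\<bar> powr p \<partial>M) powr (1 / p)"

definition Lp_closure :: "'a measure \<Rightarrow> real \<Rightarrow> ('a \<Rightarrow> real) set \<Rightarrow> ('a \<Rightarrow> real) set" where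
  "Lp_closure M p A = {X \<in> Lp M p. \<forall>\<epsilon>>0. \<exists>Y\<in>A. Lp_norm M p (\<lambda>\<omega>. X \<omega> - Y \<omega>) < \<epsilon>}"

definition Lp_interior :: "'a measure \<Rightarrow> real \<Rightarrow> ('a \<Rightarrow> real) set \<Rightarrow> ('a \<Rightarrow> real) set" where
  "Lp_interior M p A = {X \<in> A \<inter> Lp M p. \<exists>\<epsilon>>0. \<forall>Y\<in>Lp M p.
      Lp_norm M p (\<lambda>\<omega>. Y \<omega> - X \<omega>) < \<epsilon> \<longrightarrow> Y \<in> A}"

text \<open>Since u is bounded above, E[u(X)] is well defined in [-\<infinity>,\<infinity>) and
  E[u(X)] \<ge> \<alpha> (\<alpha> real) holds iff u(X) is integrable with integral \<ge> \<alpha>.\<close>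
definition util_accept :: "'a measure \<Rightarrow> (real \<Rightarrow> real) \<Rightarrow> real \<Rightarrow> ('a \<Rightarrow> real) set \<Rightarrow> ('a \<Rightarrow> real) set" where
  "util_accept M u \<alpha> P = {X \<in> P. integrable M (\<lambda>\<omega>. u (X \<omega>)) \<and> \<alpha> \<le> (\<integral>\<omega>. u (X \<omega>) \<partial>M)}"

definition traded_asset :: "'a measure \<Rightarrow> real \<Rightarrow> ('a \<Rightarrow> real) \<Rightarrow> bool" where
  "traded_asset M S0 ST \<longleftrightarrow> S0 > 0 \<and> ST \<in> borel_measurable M \<and>
     (AE \<omega> in M. ST \<omega> \<ge> 0) \<and> \<not> (AE \<omega> in M. ST \<omega> = 0)"

definition rho :: "('a \<Rightarrow> real) set \<Rightarrow> real \<Rightarrow> ('a \<Rightarrow> real) \<Rightarrow> ('a \<Rightarrow> real) \<Rightarrow> ereal" where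
  "rho B S0 ST X = Inf {ereal m | m. (\<lambda>\<omega>. X \<omega> + m / S0 * ST \<omega>) \<in> B}"

definition finite_valued_on :: "('a \<Rightarrow> real) set \<Rightarrow> (('a \<Rightarrow> real) \<Rightarrow> ereal) \<Rightarrow> bool" where
  "finite_valued_on P f \<longleftrightarrow> (\<forall>X\<in>P. \<bar>f X\<bar> \<noteq> \<infinity>)"

definition Lp_continuous :: "'a measure \<Rightarrow> real \<Rightarrow> (('a \<Rightarrow> real) \<Rightarrow> ereal) \<Rightarrow> bool" where
  "Lp_continuous M p f \<longleftrightarrow> (\<forall>X\<in>Lp M p. \<forall>\<epsilon>>0. \<exists>\<delta>>0. \<forall>Y\<in>Lp M p.
      Lp_norm M p (\<lambda>\<omega>. Y \<omega> - X \<omega>) < \<delta> \<longrightarrow>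
      \<bar>real_of_ereal (f Y) - real_of_ereal (f X)\<bar> < \<epsilon>)"

definition is_Lp_extension ::
  "'a measure \<Rightarrow> real \<Rightarrow> real \<Rightarrow> ('a \<Rightarrow> real) \<Rightarrow> ('a \<Rightarrow> real) set \<Rightarrow> (('a \<Rightarrow> real) \<Rightarrow> ereal) \<Rightarrow> bool" where
  "is_Lp_extension M p S0 ST B f \<longleftrightarrow> B \<subseteq> Lp M p \<and>
     finite_valued_on (Lp M p) (rho B S0 ST) \<and> Lp_continuous M p (rho B S0 ST) \<and>
     (\<forall>X\<in>Linf M. rho B S0 ST X = f X)"

end

theory Submission
  imports Defs
begin

text \<open>
  (i) \<open>A\<^sub>u\<^sup>p\<close> is closed in \<open>L\<^sup>p\<close>: above any level \<open>c\<close> a concave increasing \<open>u\<close> is Lipschitz, so the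
  constraint \<open>E[u(max X c)] \<ge> \<alpha>\<close> survives \<open>L\<^sup>p\<close>-limits (via \<open>L\<^sup>1 \<le> L\<^sup>p\<close>), and monotone convergence
  in \<open>c \<rightarrow> -\<infinity>\<close> gives \<open>E[u(X)] \<ge> \<alpha>\<close> because \<open>u\<close> is bounded above. Conversely, an acceptable \<open>X\<close>
  pushed slightly towards a constant \<open>x\<^sub>0\<close> with \<open>u(x\<^sub>0) > \<alpha>\<close> satisfies the constraint strictly,
  and then a truncation of it is a bounded acceptable position close to \<open>X\<close>.

  (ii) \<open>\<rho>\<^sub>p = \<rho>(A\<^sub>u\<^sup>p, S)\<close> is convex and agrees with \<open>\<rho>(A\<^sub>u\<^sup>\<infinity>, S)\<close> on \<open>L\<^sup>\<infinity>\<close>. If \<open>A\<^sub>u\<^sup>p\<close> contains a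
  ball, then \<open>\<rho>\<^sub>p \<le> 0\<close> there; convexity and finiteness on \<open>L\<^sup>\<infinity>\<close> make \<open>\<rho>\<^sub>p\<close> finite everywhere,
  and a finite convex functional bounded above on a ball is continuous. Uniqueness follows from the
  density of \<open>L\<^sup>\<infinity>\<close>. Conversely, a continuous extension is negative on a ball, whose bounded
  elements are then acceptable, so the ball lies in the closure of \<open>A\<^sub>u\<^sup>\<infinity>\<close>, which is \<open>A\<^sub>u\<^sup>p\<close> by (i).
\<close>

subsection \<open>Utility functions\<close>

lemma utility_borel_measurable: "utility u \<Longrightarrow> u \<in> borel_measurable borel"
  by (auto simp: utility_def intro: borel_measurable_mono)

lemma utility_mono: "utility u \<Longrightarrow> x \<le> y \<Longrightarrow> u x \<le> u y"
  by (auto simp: utility_def mono_def)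

lemma utility_concave:
  assumes "utility u" "0 \<le> t" "t \<le> 1"
  shows "(1-t) * u x + t * u y \<le> u ((1-t) * x + t * y)"
  using concave_onD[of UNIV u t x y] assms by (auto simp: utility_def)

lemma utility_increment_le:
  assumes U: "utility u" and "c \<le> x" "x \<le> y"
  shows "u y - u x \<le> (u c - u (c-1)) * (y - x)"
proof -
  have conc: "concave_on {c-1..y} u"
    using U unfolding utility_def concave_on_def by (auto intro: convex_on_subset)
  define s where "s = (u y - u (c-1)) / (y - (c-1))"
  have "s * (c - (c-1)) + u (c-1) \<le> u c"
    unfolding s_def using concave_onD_Icc'[OF conc, of c] assms by auto
  hence slope: "s \<le> u c - u (c-1)" by simp
  have "s * (x - (c-1)) + u (c-1) \<le> u x"
    unfolding s_def using concave_onD_Icc'[OF conc, of x] assms by auto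
  moreover have "u y - u (c-1) = s * (y - (c-1))" using assms by (simp add: s_def)
  ultimately have "u y - u x \<le> s * (y - x)" by (simp add: algebra_simps)
  also have "\<dots> \<le> (u c - u (c-1)) * (y - x)" using slope assms by (intro mult_right_mono) auto
  finally show ?thesis .
qed

lemma utility_max_lipschitz:
  assumes U: "utility u"
  shows "\<bar>u (max x c) - u (max y c)\<bar> \<le> (u c - u (c-1)) * \<bar>x - y\<bar>"
proof -
  have ordered: "\<bar>u b - u a\<bar> \<le> (u c - u (c-1)) * \<bar>b - a\<bar>" if "c \<le> a" "a \<le> b" for a b
    using utility_increment_le[OF U that] utility_mono[OF U that(2)] that by auto
  have "\<bar>u (max x c) - u (max y c)\<bar> \<le> (u c - u (c-1)) * \<bar>max x c - max y c\<bar>"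
  proof (cases "max x c \<le> max y c")
    case True
    thus ?thesis using ordered[of "max x c" "max y c"] by (simp add: abs_minus_commute)
  next
    case False
    hence "c \<le> max y c" "max y c \<le> max x c" by auto
    from ordered[OF this] show ?thesis by (simp add: abs_minus_commute)
  qed
  also have "\<dots> \<le> (u c - u (c-1)) * \<bar>x - y\<bar>"
    using utility_mono[OF U, of "c-1" c] by (intro mult_left_mono) (auto simp: max_def)
  finally show ?thesis .
qed

definition cutoff :: "real \<Rightarrow> real \<Rightarrow> real" where
  "cutoff k x = max (-k) (min k x)"

lemma cutoff_eventually_eq: "\<forall>\<^sub>F n in sequentially. cutoff (real n) x = x"
  unfolding eventually_sequentially
  by (rule exI[of _ "nat \<lceil>\<bar>x\<bar>\<rceil>"]) (auto simp: cutoff_def)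

lemma
  assumes "0 \<le> k"
  shows abs_cutoff_le: "\<bar>cutoff k x\<bar> \<le> k"
    and abs_diff_cutoff_le: "\<bar>x - cutoff k x\<bar> \<le> \<bar>x\<bar>"
    and cutoff_between: "min x 0 \<le> cutoff k x \<and> cutoff k x \<le> max x 0"
  using assms by (auto simp: cutoff_def)

lemma cutoff_measurable[measurable]:
  "X \<in> borel_measurable M \<Longrightarrow> (\<lambda>\<omega>. cutoff k (X \<omega>)) \<in> borel_measurable M"
  unfolding cutoff_def by (intro borel_measurable_max borel_measurable_min) auto

lemma cutoff_Linf: "X \<in> borel_measurable M \<Longrightarrow> 0 \<le> k \<Longrightarrow> (\<lambda>\<omega>. cutoff k (X \<omega>)) \<in> Linf M"
  unfolding Linf_def using abs_cutoff_le by (auto intro!: exI[of _ k])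

lemma abs_utility_cutoff_le:
  assumes "utility u" "0 \<le> k"
  shows "\<bar>u (cutoff k x)\<bar> \<le> \<bar>u x\<bar> + \<bar>u 0\<bar>"
proof -
  have "u (min x 0) \<le> u (cutoff k x)" "u (cutoff k x) \<le> u (max x 0)"
    using cutoff_between[OF assms(2), of x] utility_mono[OF assms(1)] by auto
  moreover have "u (min x 0) \<in> {u x, u 0}" "u (max x 0) \<in> {u x, u 0}"
    by (auto simp: min_def max_def)
  ultimately show ?thesis by auto
qed

subsection \<open>The spaces \<open>L\<^sup>p\<close> and \<open>L\<^sup>\<infinity>\<close>\<close>

lemma convex_on_abs_powr:
  assumes p: "1 \<le> p"
  shows "convex_on UNIV (\<lambda>x::real. \<bar>x\<bar> powr p)"
proof (rule convex_onI)
  fix t x y :: real assume t: "0 < t" "t < 1"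
  have powr_le_self: "s powr p \<le> s" if "0 \<le> s" "s \<le> 1" for s :: real
    using powr_mono'[of 1 p s] that p by simp
  have nonneg: "((1-t)*a + t*b) powr p \<le> (1-t) * a powr p + t * b powr p"
    if "a \<ge> 0" "b \<ge> 0" for a b :: real
  proof -
    consider "a = 0" | "b = 0" | "a > 0" "b > 0" using \<open>a \<ge> 0\<close> \<open>b \<ge> 0\<close> by linarith
    thus ?thesis
    proof cases
      case 1
      have "(t*b) powr p = t powr p * b powr p" by (simp add: powr_mult)
      also have "\<dots> \<le> t * b powr p" using powr_le_self[of t] t by (intro mult_right_mono) auto
      finally show ?thesis using 1 by simp
    next
      case 2
      have "((1-t)*a) powr p = (1-t) powr p * a powr p" by (simp add: powr_mult)
      also have "\<dots> \<le> (1-t) * a powr p" using powr_le_self[of "1-t"] t by (intro mult_right_mono) auto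
      finally show ?thesis using 2 by simp
    next
      case 3
      thus ?thesis using convex_onD[OF powr_convex[OF p], of t a b] t by simp
    qed
  qed
  have "\<bar>(1-t) *\<^sub>R x + t *\<^sub>R y\<bar> powr p \<le> ((1-t)*\<bar>x\<bar> + t*\<bar>y\<bar>) powr p"
    using t p by (intro powr_mono2) (auto simp: abs_mult intro!: order_trans[OF abs_triangle_ineq])
  also have "\<dots> \<le> (1-t) * \<bar>x\<bar> powr p + t * \<bar>y\<bar> powr p" using nonneg by simp
  finally show "\<bar>(1-t) *\<^sub>R x + t *\<^sub>R y\<bar> powr p \<le> (1-t) * \<bar>x\<bar> powr p + t * \<bar>y\<bar> powr p" .
qed auto

lemma Linf_const: "(\<lambda>_. c) \<in> Linf M"
  by (auto simp: Linf_def intro!: exI[of _ "\<bar>c\<bar>"])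

lemma Linf_lincomb:
  assumes "X \<in> Linf M" "Y \<in> Linf M"
  shows "(\<lambda>\<omega>. a * X \<omega> + b * Y \<omega>) \<in> Linf M"
proof -
  obtain C1 C2 where [measurable]: "X \<in> borel_measurable M" "Y \<in> borel_measurable M"
    and bounds: "AE \<omega> in M. \<bar>X \<omega>\<bar> \<le> C1" "AE \<omega> in M. \<bar>Y \<omega>\<bar> \<le> C2"
    using assms by (auto simp: Linf_def)
  from bounds have "AE \<omega> in M. \<bar>a * X \<omega> + b * Y \<omega>\<bar> \<le> \<bar>a\<bar> * C1 + \<bar>b\<bar> * C2"
    by eventually_elim (auto simp: abs_mult intro!: order_trans[OF abs_triangle_ineq]
        add_mono mult_left_mono)
  thus ?thesis by (auto simp: Linf_def)
qed

lemma Lp_borel_measurable: "X \<in> Lp M p \<Longrightarrow> X \<in> borel_measurable M"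
  by (simp add: Lp_def)

lemma Lp_norm_nonneg: "0 \<le> Lp_norm M p X"
  by (simp add: Lp_norm_def)

lemma Lp_norm_powr: "1 \<le> p \<Longrightarrow> Lp_norm M p X powr p = (\<integral>\<omega>. \<bar>X \<omega>\<bar> powr p \<partial>M)"
  by (simp add: Lp_norm_def powr_powr)

context prob_space
begin

lemma Linf_imp_Lp:
  assumes "1 \<le> p" "X \<in> Linf M"
  shows "X \<in> Lp M p"
proof -
  from assms obtain C where X: "X \<in> borel_measurable M" and C: "AE \<omega> in M. \<bar>X \<omega>\<bar> \<le> C"
    by (auto simp: Linf_def)
  have "integrable M (\<lambda>\<omega>. \<bar>X \<omega>\<bar> powr p)"
  proof (rule Bochner_Integration.integrable_bound)
    show "integrable M (\<lambda>_. \<bar>C\<bar> powr p)" by simp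
    show "AE x in M. norm (\<bar>X x\<bar> powr p) \<le> norm (\<bar>C\<bar> powr p)"
      using C by eventually_elim (use assms in \<open>auto intro!: powr_mono2\<close>)
  qed (use X in measurable)
  thus ?thesis using X by (simp add: Lp_def)
qed

lemma Lp_const: "1 \<le> p \<Longrightarrow> (\<lambda>_. c) \<in> Lp M p"
  using Linf_imp_Lp Linf_const by blast

text \<open>Minkowski's inequality, in the homogeneous form used with \<open>A, B\<close> slightly above the norms
  of \<open>X, Y\<close>: write \<open>X + Y\<close> as \<open>(A + B)\<close> times a convex combination of \<open>X/A\<close> and \<open>Y/B\<close>.\<close>
lemma integral_abs_add_powr_le:
  assumes p: "1 \<le> p" and X: "X \<in> Lp M p" and Y: "Y \<in> Lp M p" and "0 < A" "0 < B"
    and intX: "(\<integral>\<omega>. \<bar>X \<omega>\<bar> powr p \<partial>M) \<le> A powr p"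
    and intY: "(\<integral>\<omega>. \<bar>Y \<omega>\<bar> powr p \<partial>M) \<le> B powr p"
  shows "integrable M (\<lambda>\<omega>. \<bar>X \<omega> + Y \<omega>\<bar> powr p)"
    and "(\<integral>\<omega>. \<bar>X \<omega> + Y \<omega>\<bar> powr p \<partial>M) \<le> (A + B) powr p"
proof -
  define t where "t = B / (A + B)"
  have t: "0 \<le> t" "t \<le> 1" "1 - t = A / (A + B)"
    using \<open>0 < A\<close> \<open>0 < B\<close> by (auto simp: t_def field_simps)
  have [measurable]: "X \<in> borel_measurable M" "Y \<in> borel_measurable M"
    using X Y by (auto simp: Lp_def)
  have iX: "integrable M (\<lambda>\<omega>. \<bar>X \<omega>\<bar> powr p)" and iY: "integrable M (\<lambda>\<omega>. \<bar>Y \<omega>\<bar> powr p)"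
    using X Y by (auto simp: Lp_def)
  define g where "g \<omega> = (A + B) powr p *
      ((1-t) * (\<bar>X \<omega>\<bar> powr p / A powr p) + t * (\<bar>Y \<omega>\<bar> powr p / B powr p))" for \<omega>
  have ig: "integrable M g"
    unfolding g_def using iX iY by (intro integrable_mult_right integrable_add integrable_divide) auto
  have pointwise: "\<bar>X \<omega> + Y \<omega>\<bar> powr p \<le> g \<omega>" for \<omega>
  proof -
    have "(1-t) * (X \<omega> / A) + t * (Y \<omega> / B) = (X \<omega> + Y \<omega>) / (A + B)"
      using \<open>0 < A\<close> \<open>0 < B\<close> unfolding t(3) unfolding t_def by (simp add: add_divide_distrib)
    hence "(A + B) * \<bar>(1-t) * (X \<omega> / A) + t * (Y \<omega> / B)\<bar> = \<bar>X \<omega> + Y \<omega>\<bar>"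
      using \<open>0 < A\<close> \<open>0 < B\<close> by (simp add: abs_divide)
    hence "\<bar>X \<omega> + Y \<omega>\<bar> powr p = ((A + B) * \<bar>(1-t) * (X \<omega> / A) + t * (Y \<omega> / B)\<bar>) powr p"
      by (simp only:)
    also have "\<dots> = (A + B) powr p * \<bar>(1-t) * (X \<omega> / A) + t * (Y \<omega> / B)\<bar> powr p"
      using \<open>0 < A\<close> \<open>0 < B\<close> by (simp add: powr_mult)
    also have "\<dots> \<le> (A + B) powr p * ((1-t) * \<bar>X \<omega> / A\<bar> powr p + t * \<bar>Y \<omega> / B\<bar> powr p)"
      using convex_onD[OF convex_on_abs_powr[OF p], of t "X \<omega> / A" "Y \<omega> / B"] t
      by (intro mult_left_mono) auto
    also have "\<dots> = g \<omega>"
      using \<open>0 < A\<close> \<open>0 < B\<close> by (simp add: g_def powr_divide)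
    finally show ?thesis .
  qed
  show int: "integrable M (\<lambda>\<omega>. \<bar>X \<omega> + Y \<omega>\<bar> powr p)"
    by (rule Bochner_Integration.integrable_bound[OF ig])
       (use pointwise in \<open>auto intro!: AE_I2 order_trans[OF _ abs_ge_self]\<close>)
  have "(\<integral>\<omega>. \<bar>X \<omega> + Y \<omega>\<bar> powr p \<partial>M) \<le> integral\<^sup>L M g"
    by (rule integral_mono[OF int ig pointwise])
  also have "\<dots> = (A + B) powr p * ((1-t) * ((\<integral>\<omega>. \<bar>X \<omega>\<bar> powr p \<partial>M) / A powr p)
      + t * ((\<integral>\<omega>. \<bar>Y \<omega>\<bar> powr p \<partial>M) / B powr p))"
    unfolding g_def using iX iY by simp
  also have "\<dots> \<le> (A + B) powr p * ((1-t) * 1 + t * 1)"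
    using intX intY t \<open>0 < A\<close> \<open>0 < B\<close>
    by (intro mult_left_mono add_mono) (auto simp: divide_le_eq_1)
  finally show "(\<integral>\<omega>. \<bar>X \<omega> + Y \<omega>\<bar> powr p \<partial>M) \<le> (A + B) powr p" by simp
qed

lemma
  assumes p: "1 \<le> p" and X: "X \<in> Lp M p" and Y: "Y \<in> Lp M p"
  shows Lp_add: "(\<lambda>\<omega>. X \<omega> + Y \<omega>) \<in> Lp M p"
    and Lp_norm_add_le: "Lp_norm M p (\<lambda>\<omega>. X \<omega> + Y \<omega>) \<le> Lp_norm M p X + Lp_norm M p Y"
proof -
  have bound: "integrable M (\<lambda>\<omega>. \<bar>X \<omega> + Y \<omega>\<bar> powr p) \<and>
      Lp_norm M p (\<lambda>\<omega>. X \<omega> + Y \<omega>) \<le> Lp_norm M p X + Lp_norm M p Y + 2 * \<eta>"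
    if "0 < \<eta>" for \<eta>
  proof -
    define A where "A = Lp_norm M p X + \<eta>"
    define B where "B = Lp_norm M p Y + \<eta>"
    have AB: "0 < A" "0 < B" using that by (auto simp: A_def B_def intro: add_nonneg_pos Lp_norm_nonneg)
    have "(\<integral>\<omega>. \<bar>X \<omega>\<bar> powr p \<partial>M) \<le> A powr p" "(\<integral>\<omega>. \<bar>Y \<omega>\<bar> powr p \<partial>M) \<le> B powr p"
      unfolding Lp_norm_powr[OF p, symmetric] A_def B_def using p that
      by (auto intro!: powr_mono2 Lp_norm_nonneg)
    note sum = integral_abs_add_powr_le[OF p X Y AB this]
    have "Lp_norm M p (\<lambda>\<omega>. X \<omega> + Y \<omega>) \<le> ((A + B) powr p) powr (1/p)"
      unfolding Lp_norm_def using p sum(2) by (intro powr_mono2) auto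
    also have "\<dots> = A + B" using p AB by (simp add: powr_powr)
    finally show ?thesis using sum(1) by (simp add: A_def B_def)
  qed
  show "(\<lambda>\<omega>. X \<omega> + Y \<omega>) \<in> Lp M p"
    using bound[of 1] X Y by (auto simp: Lp_def)
  show "Lp_norm M p (\<lambda>\<omega>. X \<omega> + Y \<omega>) \<le> Lp_norm M p X + Lp_norm M p Y"
  proof (rule field_le_epsilon)
    fix e :: real assume "0 < e"
    thus "Lp_norm M p (\<lambda>\<omega>. X \<omega> + Y \<omega>) \<le> Lp_norm M p X + Lp_norm M p Y + e"
      using bound[of "e/2"] by simp
  qed
qed

lemma
  assumes p: "1 \<le> p" and X: "X \<in> Lp M p"
  shows Lp_scale: "(\<lambda>\<omega>. c * X \<omega>) \<in> Lp M p"
    and Lp_norm_scale: "Lp_norm M p (\<lambda>\<omega>. c * X \<omega>) = \<bar>c\<bar> * Lp_norm M p X"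
proof -
  have factor: "\<bar>c * X \<omega>\<bar> powr p = \<bar>c\<bar> powr p * \<bar>X \<omega>\<bar> powr p" for \<omega>
    by (simp add: abs_mult powr_mult)
  show "(\<lambda>\<omega>. c * X \<omega>) \<in> Lp M p" using X by (auto simp: Lp_def factor)
  have "Lp_norm M p (\<lambda>\<omega>. c * X \<omega>) = (\<bar>c\<bar> powr p) powr (1/p) * Lp_norm M p X"
    unfolding Lp_norm_def factor by (simp add: powr_mult)
  thus "Lp_norm M p (\<lambda>\<omega>. c * X \<omega>) = \<bar>c\<bar> * Lp_norm M p X" using p by (simp add: powr_powr)
qed

lemma Lp_lincomb:
  assumes "1 \<le> p" "X \<in> Lp M p" "Y \<in> Lp M p"
  shows "(\<lambda>\<omega>. a * X \<omega> + b * Y \<omega>) \<in> Lp M p"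
  using Lp_add[OF assms(1) Lp_scale[OF assms(1,2)] Lp_scale[OF assms(1,3)]] .

lemma Lp_diff: "1 \<le> p \<Longrightarrow> X \<in> Lp M p \<Longrightarrow> Y \<in> Lp M p \<Longrightarrow> (\<lambda>\<omega>. X \<omega> - Y \<omega>) \<in> Lp M p"
  using Lp_lincomb[of p X Y 1 "-1"] by simp

lemma Lp_norm_diff_commute: "Lp_norm M p (\<lambda>\<omega>. X \<omega> - Y \<omega>) = Lp_norm M p (\<lambda>\<omega>. Y \<omega> - X \<omega>)"
  by (simp add: Lp_norm_def abs_minus_commute)

lemma Lp_norm_zero: "Lp_norm M p (\<lambda>_. 0) = 0"
  by (simp add: Lp_norm_def)

lemma Lp_norm_diff_triangle:
  assumes "1 \<le> p" "X \<in> Lp M p" "Y \<in> Lp M p" "Z \<in> Lp M p"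
  shows "Lp_norm M p (\<lambda>\<omega>. X \<omega> - Z \<omega>) \<le>
    Lp_norm M p (\<lambda>\<omega>. X \<omega> - Y \<omega>) + Lp_norm M p (\<lambda>\<omega>. Y \<omega> - Z \<omega>)"
  using Lp_norm_add_le[OF assms(1) Lp_diff[OF assms(1,2,3)] Lp_diff[OF assms(1,3,4)]] by simp

lemma
  assumes p: "1 \<le> p" and X: "X \<in> Lp M p"
  shows integrable_abs_Lp: "integrable M (\<lambda>\<omega>. \<bar>X \<omega>\<bar>)"
    and integral_abs_le_Lp_norm: "(\<integral>\<omega>. \<bar>X \<omega>\<bar> \<partial>M) \<le> Lp_norm M p X"
proof -
  have [measurable]: "X \<in> borel_measurable M" and iX: "integrable M (\<lambda>\<omega>. \<bar>X \<omega>\<bar> powr p)"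
    using X by (auto simp: Lp_def)
  have pointwise: "\<bar>X \<omega>\<bar> \<le> 1 + \<bar>X \<omega>\<bar> powr p" for \<omega>
  proof (cases "\<bar>X \<omega>\<bar> \<le> 1")
    case True
    thus ?thesis using powr_ge_zero[of "\<bar>X \<omega>\<bar>" p] by linarith
  next
    case False
    hence "\<bar>X \<omega>\<bar> powr 1 \<le> \<bar>X \<omega>\<bar> powr p" using p by (intro powr_mono) auto
    thus ?thesis by simp
  qed
  show i1: "integrable M (\<lambda>\<omega>. \<bar>X \<omega>\<bar>)"
    by (rule Bochner_Integration.integrable_bound[where f="\<lambda>\<omega>. 1 + \<bar>X \<omega>\<bar> powr p"])
       (use iX pointwise in \<open>auto intro!: AE_I2 order_trans[OF _ abs_ge_self]\<close>)
  have "(\<lambda>x. \<bar>x\<bar> powr p) (expectation (\<lambda>\<omega>. \<bar>X \<omega>\<bar>))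
      \<le> expectation (\<lambda>\<omega>. (\<lambda>x. \<bar>x\<bar> powr p) (\<bar>X \<omega>\<bar>))"
    by (rule jensens_inequality[where I=UNIV]) (use i1 iX convex_on_abs_powr[OF p] in auto)
  hence "(\<integral>\<omega>. \<bar>X \<omega>\<bar> \<partial>M) powr p \<le> (\<integral>\<omega>. \<bar>X \<omega>\<bar> powr p \<partial>M)" by simp
  hence "((\<integral>\<omega>. \<bar>X \<omega>\<bar> \<partial>M) powr p) powr (1/p) \<le> Lp_norm M p X"
    unfolding Lp_norm_def using p by (intro powr_mono2) auto
  thus "(\<integral>\<omega>. \<bar>X \<omega>\<bar> \<partial>M) \<le> Lp_norm M p X" using p by (simp add: powr_powr)
qed

lemma Lp_norm_diff_cutoff_eventually_less:
  assumes p: "1 \<le> p" and X: "X \<in> Lp M p" and "0 < \<epsilon>"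
  shows "\<forall>\<^sub>F n in sequentially. Lp_norm M p (\<lambda>\<omega>. X \<omega> - cutoff (real n) (X \<omega>)) < \<epsilon>"
proof -
  have [measurable]: "X \<in> borel_measurable M" using X by (simp add: Lp_def)
  have "(\<lambda>n. \<integral>\<omega>. \<bar>X \<omega> - cutoff (real n) (X \<omega>)\<bar> powr p \<partial>M) \<longlonglongrightarrow> (\<integral>\<omega>. 0 \<partial>M)"
  proof (rule integral_dominated_convergence[where w="\<lambda>\<omega>. \<bar>X \<omega>\<bar> powr p"])
    show "AE \<omega> in M. (\<lambda>n. \<bar>X \<omega> - cutoff (real n) (X \<omega>)\<bar> powr p) \<longlonglongrightarrow> 0"
    proof (rule AE_I2)
      fix \<omega>
      show "(\<lambda>n. \<bar>X \<omega> - cutoff (real n) (X \<omega>)\<bar> powr p) \<longlonglongrightarrow> 0"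
        by (rule tendsto_eventually) (use cutoff_eventually_eq[of "X \<omega>"] in \<open>auto elim: eventually_mono\<close>)
    qed
    show "AE \<omega> in M. norm (\<bar>X \<omega> - cutoff (real n) (X \<omega>)\<bar> powr p) \<le> \<bar>X \<omega>\<bar> powr p" for n
      using p abs_diff_cutoff_le[of "real n"] by (auto intro!: powr_mono2)
  qed (use X in \<open>auto simp: Lp_def\<close>)
  hence "\<forall>\<^sub>F n in sequentially. (\<integral>\<omega>. \<bar>X \<omega> - cutoff (real n) (X \<omega>)\<bar> powr p \<partial>M) < \<epsilon> powr p"
    using \<open>0 < \<epsilon>\<close> by (auto intro: order_tendstoD)
  thus ?thesis
  proof eventually_elim
    case (elim n)
    hence "Lp_norm M p (\<lambda>\<omega>. X \<omega> - cutoff (real n) (X \<omega>)) < (\<epsilon> powr p) powr (1/p)"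
      unfolding Lp_norm_def using p by (intro powr_less_mono2) auto
    thus ?case using p \<open>0 < \<epsilon>\<close> by (simp add: powr_powr)
  qed
qed

lemma Linf_dense_in_Lp:
  assumes "1 \<le> p" "X \<in> Lp M p" "0 < \<epsilon>"
  obtains Y where "Y \<in> Linf M" "Lp_norm M p (\<lambda>\<omega>. X \<omega> - Y \<omega>) < \<epsilon>"
proof -
  obtain n where "Lp_norm M p (\<lambda>\<omega>. X \<omega> - cutoff (real n) (X \<omega>)) < \<epsilon>"
    using eventually_happens'[OF _ Lp_norm_diff_cutoff_eventually_less[OF assms]] by auto
  moreover have "(\<lambda>\<omega>. cutoff (real n) (X \<omega>)) \<in> Linf M"
    using assms(2) by (intro cutoff_Linf) (auto simp: Lp_def)
  ultimately show ?thesis using that by blast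
qed

subsection \<open>Acceptance sets of expected utility\<close>

lemma integrable_utility_max:
  assumes U: "utility u" and K: "\<And>x. u x \<le> K" and [measurable]: "Z \<in> borel_measurable M"
  shows "integrable M (\<lambda>\<omega>. u (max (Z \<omega>) c))"
proof (rule Bochner_Integration.integrable_bound[where f="\<lambda>_. \<bar>u c\<bar> + \<bar>K\<bar>"])
  show "AE \<omega> in M. norm (u (max (Z \<omega>) c)) \<le> norm (\<bar>u c\<bar> + \<bar>K\<bar>)"
  proof (rule AE_I2)
    fix \<omega>
    have "u c \<le> u (max (Z \<omega>) c)" "u (max (Z \<omega>) c) \<le> K"
      using utility_mono[OF U, of c "max (Z \<omega>) c"] K by auto
    thus "norm (u (max (Z \<omega>) c)) \<le> norm (\<bar>u c\<bar> + \<bar>K\<bar>)" by auto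
  qed
qed (use utility_borel_measurable[OF U] in measurable)

lemma util_accept_upward:
  assumes U: "utility u" and K: "\<And>x. u x \<le> K"
    and X: "X \<in> util_accept M u \<alpha> P" and "Y \<in> P" "Y \<in> borel_measurable M"
    and le: "AE \<omega> in M. X \<omega> \<le> Y \<omega>"
  shows "Y \<in> util_accept M u \<alpha> P"
proof -
  have iX: "integrable M (\<lambda>\<omega>. u (X \<omega>))" and "\<alpha> \<le> (\<integral>\<omega>. u (X \<omega>) \<partial>M)"
    using X by (auto simp: util_accept_def)
  have iY: "integrable M (\<lambda>\<omega>. u (Y \<omega>))"
  proof (rule Bochner_Integration.integrable_bound[where f="\<lambda>\<omega>. \<bar>u (X \<omega>)\<bar> + \<bar>K\<bar>"])
    show "AE \<omega> in M. norm (u (Y \<omega>)) \<le> norm (\<bar>u (X \<omega>)\<bar> + \<bar>K\<bar>)"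
      using le by eventually_elim (use utility_mono[OF U] K in \<open>smt (verit) real_norm_def\<close>)
  qed (use iX utility_borel_measurable[OF U] \<open>Y \<in> borel_measurable M\<close> in auto)
  have "(\<integral>\<omega>. u (X \<omega>) \<partial>M) \<le> (\<integral>\<omega>. u (Y \<omega>) \<partial>M)"
    by (rule integral_mono_AE[OF iX iY]) (use le utility_mono[OF U] in \<open>auto elim: eventually_mono\<close>)
  thus ?thesis using \<open>\<alpha> \<le> _\<close> iY \<open>Y \<in> P\<close> by (auto simp: util_accept_def)
qed

lemma util_accept_convex:
  assumes U: "utility u" and K: "\<And>x. u x \<le> K"
    and X: "X \<in> util_accept M u \<alpha> P" and Y: "Y \<in> util_accept M u \<alpha> P"
    and t: "0 \<le> t" "t \<le> 1" and "(\<lambda>\<omega>. (1-t) * X \<omega> + t * Y \<omega>) \<in> P"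
    and [measurable]: "X \<in> borel_measurable M" "Y \<in> borel_measurable M"
  shows "(\<lambda>\<omega>. (1-t) * X \<omega> + t * Y \<omega>) \<in> util_accept M u \<alpha> P"
proof -
  have [measurable]: "u \<in> borel_measurable borel" using U by (rule utility_borel_measurable)
  have iX: "integrable M (\<lambda>\<omega>. u (X \<omega>))" and aX: "\<alpha> \<le> (\<integral>\<omega>. u (X \<omega>) \<partial>M)"
    and iY: "integrable M (\<lambda>\<omega>. u (Y \<omega>))" and aY: "\<alpha> \<le> (\<integral>\<omega>. u (Y \<omega>) \<partial>M)"
    using X Y by (auto simp: util_accept_def)
  have iC: "integrable M (\<lambda>\<omega>. (1-t) * u (X \<omega>) + t * u (Y \<omega>))" using iX iY by auto
  have pointwise: "(1-t) * u (X \<omega>) + t * u (Y \<omega>) \<le> u ((1-t) * X \<omega> + t * Y \<omega>)" for \<omega>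
    using utility_concave[OF U t] .
  have iZ: "integrable M (\<lambda>\<omega>. u ((1-t) * X \<omega> + t * Y \<omega>))"
  proof (rule Bochner_Integration.integrable_bound
      [where f="\<lambda>\<omega>. \<bar>(1-t) * u (X \<omega>) + t * u (Y \<omega>)\<bar> + \<bar>K\<bar>"])
    show "AE \<omega> in M. norm (u ((1-t) * X \<omega> + t * Y \<omega>))
        \<le> norm (\<bar>(1-t) * u (X \<omega>) + t * u (Y \<omega>)\<bar> + \<bar>K\<bar>)"
      using pointwise K by (intro AE_I2) (smt (verit) real_norm_def)
  qed (use iC in auto)
  have "\<alpha> \<le> (1-t) * (\<integral>\<omega>. u (X \<omega>) \<partial>M) + t * (\<integral>\<omega>. u (Y \<omega>) \<partial>M)"
    using add_mono[OF mult_left_mono[OF aX, of "1-t"] mult_left_mono[OF aY, of t]] t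
    by (simp add: algebra_simps)
  also have "\<dots> = (\<integral>\<omega>. (1-t) * u (X \<omega>) + t * u (Y \<omega>) \<partial>M)" using iX iY by simp
  also have "\<dots> \<le> (\<integral>\<omega>. u ((1-t) * X \<omega> + t * Y \<omega>) \<partial>M)" by (rule integral_mono[OF iC iZ pointwise])
  finally show ?thesis using iZ \<open>(\<lambda>\<omega>. _) \<in> P\<close> by (auto simp: util_accept_def)
qed

text \<open>Monotone convergence as the lower truncation level decreases to \<open>-\<infinity>\<close>; the upper bound
  \<open>K\<close> of \<open>u\<close> makes \<open>K - u (max X (-n))\<close> a nonnegative increasing sequence.\<close>
lemma expected_utility_ge_if_truncations_ge:
  assumes U: "utility u" and K: "\<And>x. u x \<le> K" and [measurable]: "X \<in> borel_measurable M"
    and bound: "\<And>n. \<alpha> \<le> (\<integral>\<omega>. u (max (X \<omega>) (- real n)) \<partial>M)"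
  shows "integrable M (\<lambda>\<omega>. u (X \<omega>)) \<and> \<alpha> \<le> (\<integral>\<omega>. u (X \<omega>) \<partial>M)"
proof -
  have [measurable]: "u \<in> borel_measurable borel" using U by (rule utility_borel_measurable)
  define f where "f n \<omega> = K - u (max (X \<omega>) (- real n))" for n \<omega>
  have fi: "integrable M (f n)" for n
    unfolding f_def using integrable_utility_max[OF U K, of X "- real n"] by simp
  have "incseq (\<lambda>n. integral\<^sup>L M (f n))"
    by (intro incseq_SucI integral_mono[OF fi fi]) (auto simp: f_def intro!: utility_mono[OF U])
  moreover have fbound: "integral\<^sup>L M (f n) \<le> K - \<alpha>" for n
    using bound[of n] integrable_utility_max[OF U K, of X "- real n"]
    by (simp add: f_def[abs_def] prob_space)
  ultimately have conv: "(\<lambda>n. integral\<^sup>L M (f n)) \<longlonglongrightarrow> (SUP n. integral\<^sup>L M (f n))"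
    by (intro LIMSEQ_incseq_SUP) (auto intro!: bdd_aboveI)
  have lim: "AE \<omega> in M. (\<lambda>n. f n \<omega>) \<longlonglongrightarrow> K - u (X \<omega>)"
  proof (rule AE_I2)
    fix \<omega>
    have "\<forall>\<^sub>F n in sequentially. max (X \<omega>) (- real n) = X \<omega>"
      unfolding eventually_sequentially by (rule exI[of _ "nat \<lceil>\<bar>X \<omega>\<bar>\<rceil>"]) auto
    thus "(\<lambda>n. f n \<omega>) \<longlonglongrightarrow> K - u (X \<omega>)"
      unfolding f_def by (rule tendsto_eventually[OF eventually_mono]) simp
  qed
  have mono: "AE \<omega> in M. mono (\<lambda>n. f n \<omega>)" and nonneg: "\<And>n. AE \<omega> in M. 0 \<le> f n \<omega>"
    by (auto simp: f_def mono_def K intro!: AE_I2 utility_mono[OF U])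
  have "(\<lambda>\<omega>. K - u (X \<omega>)) \<in> borel_measurable M" by measurable
  note monotone_convergence = integral_monotone_convergence_nonneg[OF fi mono nonneg lim conv this]
  have iKu: "integrable M (\<lambda>\<omega>. K - u (X \<omega>))"
    and eq: "(\<integral>\<omega>. K - u (X \<omega>) \<partial>M) = (SUP n. integral\<^sup>L M (f n))"
    using monotone_convergence by auto
  have iU: "integrable M (\<lambda>\<omega>. u (X \<omega>))"
    using Bochner_Integration.integrable_diff[OF integrable_const[of K] iKu] by simp
  have "(SUP n. integral\<^sup>L M (f n)) \<le> K - \<alpha>"
    by (rule LIMSEQ_le_const2[OF conv]) (use fbound in auto)
  thus ?thesis using eq iU by (simp add: prob_space)
qed

lemma Lp_closure_util_accept_Lp:
  assumes p: "1 \<le> p" and U: "utility u" and K: "\<And>x. u x \<le> K"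
  shows "Lp_closure M p (util_accept M u \<alpha> (Lp M p)) \<subseteq> util_accept M u \<alpha> (Lp M p)"
proof
  fix X assume X: "X \<in> Lp_closure M p (util_accept M u \<alpha> (Lp M p))"
  hence XL: "X \<in> Lp M p" by (simp add: Lp_closure_def)
  have [measurable]: "X \<in> borel_measurable M" using XL by (rule Lp_borel_measurable)
  have "\<alpha> \<le> (\<integral>\<omega>. u (max (X \<omega>) c) \<partial>M)" for c
  proof (rule field_le_epsilon)
    fix \<eta> :: real assume "0 < \<eta>"
    define L where "L = u c - u (c-1)"
    have "0 \<le> L" using utility_mono[OF U, of "c-1" c] by (simp add: L_def)
    hence "0 < \<eta> / (L+1)" using \<open>0 < \<eta>\<close> by simp
    then obtain Y where Y: "Y \<in> util_accept M u \<alpha> (Lp M p)"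
      and dist: "Lp_norm M p (\<lambda>\<omega>. X \<omega> - Y \<omega>) < \<eta> / (L+1)"
      using X unfolding Lp_closure_def by blast
    have YL: "Y \<in> Lp M p" and iY: "integrable M (\<lambda>\<omega>. u (Y \<omega>))"
      and aY: "\<alpha> \<le> (\<integral>\<omega>. u (Y \<omega>) \<partial>M)" using Y by (auto simp: util_accept_def)
    have [measurable]: "Y \<in> borel_measurable M" using YL by (rule Lp_borel_measurable)
    note iXc = integrable_utility_max[OF U K, of X c] and iYc = integrable_utility_max[OF U K, of Y c]
    have DL: "(\<lambda>\<omega>. X \<omega> - Y \<omega>) \<in> Lp M p" by (rule Lp_diff[OF p XL YL])
    have "(\<integral>\<omega>. u (max (Y \<omega>) c) - u (max (X \<omega>) c) \<partial>M) \<le> (\<integral>\<omega>. L * \<bar>X \<omega> - Y \<omega>\<bar> \<partial>M)"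
      using utility_max_lipschitz[OF U, of "Y \<omega>" c "X \<omega>" for \<omega>]
      by (intro integral_mono) (use iXc iYc integrable_abs_Lp[OF p DL] in
          \<open>auto simp: L_def abs_minus_commute abs_le_iff\<close>)
    also have "\<dots> = L * (\<integral>\<omega>. \<bar>X \<omega> - Y \<omega>\<bar> \<partial>M)" by (rule integral_mult_right_zero)
    also have "\<dots> \<le> L * (\<eta> / (L+1))"
      using integral_abs_le_Lp_norm[OF p DL] dist by (intro mult_left_mono \<open>0 \<le> L\<close>) linarith
    also have "\<dots> \<le> \<eta>" using \<open>0 \<le> L\<close> \<open>0 < \<eta>\<close> by (simp add: field_simps)
    finally have "(\<integral>\<omega>. u (max (Y \<omega>) c) \<partial>M) - (\<integral>\<omega>. u (max (X \<omega>) c) \<partial>M) \<le> \<eta>"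
      using iXc iYc by simp
    moreover have "\<alpha> \<le> (\<integral>\<omega>. u (max (Y \<omega>) c) \<partial>M)"
      using aY integral_mono[OF iY iYc] utility_mono[OF U] by fastforce
    ultimately show "\<alpha> \<le> (\<integral>\<omega>. u (max (X \<omega>) c) \<partial>M) + \<eta>" by linarith
  qed
  from expected_utility_ge_if_truncations_ge[OF U K \<open>X \<in> borel_measurable M\<close> this]
  show "X \<in> util_accept M u \<alpha> (Lp M p)" using XL by (simp add: util_accept_def)
qed

text \<open>Moving \<open>X\<close> slightly towards a constant \<open>x\<^sub>0\<close> with \<open>u x\<^sub>0 > \<alpha>\<close> makes the constraint strict.\<close>
lemma util_accept_approx_strict:
  assumes p: "1 \<le> p" and U: "utility u" and K: "\<And>x. u x \<le> K" and x0: "\<alpha> < u x\<^sub>0"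
    and X: "X \<in> util_accept M u \<alpha> (Lp M p)" and "0 < \<epsilon>"
  obtains Y where "Y \<in> Lp M p" "integrable M (\<lambda>\<omega>. u (Y \<omega>))" "\<alpha> < (\<integral>\<omega>. u (Y \<omega>) \<partial>M)"
    "Lp_norm M p (\<lambda>\<omega>. X \<omega> - Y \<omega>) < \<epsilon>"
proof -
  have XL: "X \<in> Lp M p" and iX: "integrable M (\<lambda>\<omega>. u (X \<omega>))" and aX: "\<alpha> \<le> (\<integral>\<omega>. u (X \<omega>) \<partial>M)"
    using X by (auto simp: util_accept_def)
  have [measurable]: "X \<in> borel_measurable M" using XL by (rule Lp_borel_measurable)
  define D where "D = Lp_norm M p (\<lambda>\<omega>. X \<omega> - x\<^sub>0)"
  have "0 \<le> D" by (simp add: D_def Lp_norm_nonneg)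
  define l where "l = min 1 (\<epsilon> / (D + 1))"
  have l: "0 < l" "l \<le> 1" using \<open>0 < \<epsilon>\<close> \<open>0 \<le> D\<close> by (auto simp: l_def)
  define Y where "Y \<omega> = (1-l) * X \<omega> + l * x\<^sub>0" for \<omega>
  have YL: "Y \<in> Lp M p" unfolding Y_def using Lp_lincomb[OF p XL Lp_const[OF p]] .
  have "Y \<in> util_accept M u \<alpha> (Lp M p)" unfolding Y_def
    by (rule util_accept_convex[OF U K X, of "\<lambda>_. x\<^sub>0" l])
       (use YL[unfolded Y_def] x0 l Lp_const[OF p, of x\<^sub>0] in \<open>auto simp: util_accept_def prob_space\<close>)
  hence iY: "integrable M (\<lambda>\<omega>. u (Y \<omega>))" by (simp add: util_accept_def)
  have "\<alpha> < (1-l) * (\<integral>\<omega>. u (X \<omega>) \<partial>M) + l * u x\<^sub>0"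
    using add_le_less_mono[OF mult_left_mono[OF aX, of "1-l"] mult_strict_left_mono[OF x0 \<open>0 < l\<close>]] l
    by (simp add: algebra_simps)
  also have "\<dots> = (\<integral>\<omega>. (1-l) * u (X \<omega>) + l * u x\<^sub>0 \<partial>M)" using iX by (simp add: prob_space)
  also have "\<dots> \<le> (\<integral>\<omega>. u (Y \<omega>) \<partial>M)"
    by (rule integral_mono) (use iX iY utility_concave[OF U less_imp_le[OF l(1)] l(2)] in \<open>auto simp: Y_def\<close>)
  finally have "\<alpha> < (\<integral>\<omega>. u (Y \<omega>) \<partial>M)" .
  moreover have "Lp_norm M p (\<lambda>\<omega>. X \<omega> - Y \<omega>) < \<epsilon>"
  proof -
    have "(\<lambda>\<omega>. X \<omega> - Y \<omega>) = (\<lambda>\<omega>. l * (X \<omega> - x\<^sub>0))" by (auto simp: Y_def algebra_simps)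
    hence "Lp_norm M p (\<lambda>\<omega>. X \<omega> - Y \<omega>) = l * D"
      using Lp_norm_scale[OF p Lp_diff[OF p XL Lp_const[OF p]], of l] l by (simp add: D_def)
    also have "\<dots> \<le> \<epsilon> / (D + 1) * D" using \<open>0 \<le> D\<close> by (intro mult_right_mono) (auto simp: l_def)
    also have "\<dots> < \<epsilon>" using \<open>0 \<le> D\<close> \<open>0 < \<epsilon>\<close> by (simp add: field_simps)
    finally show ?thesis .
  qed
  ultimately show ?thesis using that YL iY by blast
qed

lemma util_accept_Linf_approx:
  assumes p: "1 \<le> p" and U: "utility u" and XL: "X \<in> Lp M p"
    and iX: "integrable M (\<lambda>\<omega>. u (X \<omega>))" and aX: "\<alpha> < (\<integral>\<omega>. u (X \<omega>) \<partial>M)" and "0 < \<epsilon>"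
  obtains Y where "Y \<in> util_accept M u \<alpha> (Linf M)" "Lp_norm M p (\<lambda>\<omega>. X \<omega> - Y \<omega>) < \<epsilon>"
proof -
  have [measurable]: "u \<in> borel_measurable borel" using U by (rule utility_borel_measurable)
  have [measurable]: "X \<in> borel_measurable M" using XL by (rule Lp_borel_measurable)
  define Y where "Y n \<omega> = cutoff (real n) (X \<omega>)" for n \<omega>
  have lim: "AE \<omega> in M. (\<lambda>n. u (Y n \<omega>)) \<longlonglongrightarrow> u (X \<omega>)"
  proof (rule AE_I2)
    fix \<omega>
    show "(\<lambda>n. u (Y n \<omega>)) \<longlonglongrightarrow> u (X \<omega>)" unfolding Y_def
      by (rule tendsto_eventually) (use cutoff_eventually_eq[of "X \<omega>"] in \<open>auto elim: eventually_mono\<close>)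
  qed
  have dom: "\<And>n. AE \<omega> in M. norm (u (Y n \<omega>)) \<le> \<bar>u (X \<omega>)\<bar> + \<bar>u 0\<bar>"
    unfolding Y_def using abs_utility_cutoff_le[OF U] by (intro AE_I2) auto
  have idom: "integrable M (\<lambda>\<omega>. \<bar>u (X \<omega>)\<bar> + \<bar>u 0\<bar>)" using iX by auto
  have iY: "integrable M (\<lambda>\<omega>. u (Y n \<omega>))" for n
    by (rule integrable_dominated_convergence2[OF _ _ idom lim dom]) (auto simp: Y_def)
  have "(\<lambda>n. \<integral>\<omega>. u (Y n \<omega>) \<partial>M) \<longlonglongrightarrow> (\<integral>\<omega>. u (X \<omega>) \<partial>M)"
    by (rule integral_dominated_convergence[OF _ _ idom lim dom]) (auto simp: Y_def)
  hence "\<forall>\<^sub>F n in sequentially. \<alpha> < (\<integral>\<omega>. u (Y n \<omega>) \<partial>M)"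
    using aX by (rule order_tendstoD)
  moreover have "\<forall>\<^sub>F n in sequentially. Lp_norm M p (\<lambda>\<omega>. X \<omega> - Y n \<omega>) < \<epsilon>"
    unfolding Y_def by (rule Lp_norm_diff_cutoff_eventually_less[OF p XL \<open>0 < \<epsilon>\<close>])
  ultimately have "\<forall>\<^sub>F n in sequentially.
      \<alpha> < (\<integral>\<omega>. u (Y n \<omega>) \<partial>M) \<and> Lp_norm M p (\<lambda>\<omega>. X \<omega> - Y n \<omega>) < \<epsilon>"
    by (rule eventually_conj)
  then obtain n where "\<alpha> < (\<integral>\<omega>. u (Y n \<omega>) \<partial>M)" "Lp_norm M p (\<lambda>\<omega>. X \<omega> - Y n \<omega>) < \<epsilon>"
    unfolding eventually_sequentially by blast
  moreover have "Y n \<in> Linf M" unfolding Y_def by (intro cutoff_Linf) auto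
  ultimately show ?thesis using that[of "Y n"] iY[of n] by (simp add: util_accept_def)
qed

lemma Lp_closure_util_accept_Linf:
  assumes p: "1 \<le> p" and U: "utility u" and K: "\<And>x. u x \<le> K" and x0: "\<alpha> < u x\<^sub>0"
  shows "Lp_closure M p (util_accept M u \<alpha> (Linf M)) = util_accept M u \<alpha> (Lp M p)"
proof
  have "util_accept M u \<alpha> (Linf M) \<subseteq> util_accept M u \<alpha> (Lp M p)"
    using Linf_imp_Lp[OF p] by (auto simp: util_accept_def)
  hence "Lp_closure M p (util_accept M u \<alpha> (Linf M)) \<subseteq> Lp_closure M p (util_accept M u \<alpha> (Lp M p))"
    unfolding Lp_closure_def by blast
  thus "Lp_closure M p (util_accept M u \<alpha> (Linf M)) \<subseteq> util_accept M u \<alpha> (Lp M p)"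
    using Lp_closure_util_accept_Lp[OF p U K] by blast
next
  show "util_accept M u \<alpha> (Lp M p) \<subseteq> Lp_closure M p (util_accept M u \<alpha> (Linf M))"
  proof
    fix X assume X: "X \<in> util_accept M u \<alpha> (Lp M p)"
    have "\<exists>Y\<in>util_accept M u \<alpha> (Linf M). Lp_norm M p (\<lambda>\<omega>. X \<omega> - Y \<omega>) < \<epsilon>" if "0 < \<epsilon>" for \<epsilon>
    proof -
      obtain Z where Z: "Z \<in> Lp M p" "integrable M (\<lambda>\<omega>. u (Z \<omega>))" "\<alpha> < (\<integral>\<omega>. u (Z \<omega>) \<partial>M)"
        and XZ: "Lp_norm M p (\<lambda>\<omega>. X \<omega> - Z \<omega>) < \<epsilon>/2"
        using util_accept_approx_strict[OF p U K x0 X, of "\<epsilon>/2"] \<open>0 < \<epsilon>\<close> by auto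
      obtain Y where Y: "Y \<in> util_accept M u \<alpha> (Linf M)" and ZY: "Lp_norm M p (\<lambda>\<omega>. Z \<omega> - Y \<omega>) < \<epsilon>/2"
        using util_accept_Linf_approx[OF p U Z, of "\<epsilon>/2"] \<open>0 < \<epsilon>\<close> by auto
      have "Y \<in> Lp M p" using Y Linf_imp_Lp[OF p] by (auto simp: util_accept_def)
      hence "Lp_norm M p (\<lambda>\<omega>. X \<omega> - Y \<omega>) < \<epsilon>"
        using Lp_norm_diff_triangle[OF p _ Z(1), of X Y] X XZ ZY by (auto simp: util_accept_def)
      thus ?thesis using Y by blast
    qed
    thus "X \<in> Lp_closure M p (util_accept M u \<alpha> (Linf M))"
      using X by (auto simp: Lp_closure_def util_accept_def)
  qed
qed

subsection \<open>Convex functionals on \<open>L\<^sup>p\<close>\<close>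

definition Lp_convex :: "real \<Rightarrow> (('a \<Rightarrow> real) \<Rightarrow> real) \<Rightarrow> bool" where
  "Lp_convex p f \<longleftrightarrow> (\<forall>X\<in>Lp M p. \<forall>Y\<in>Lp M p. \<forall>t. 0 \<le> t \<longrightarrow> t \<le> 1 \<longrightarrow>
     f (\<lambda>\<omega>. (1-t) * X \<omega> + t * Y \<omega>) \<le> (1-t) * f X + t * f Y)"

lemma Lp_convexD:
  "Lp_convex p f \<Longrightarrow> X \<in> Lp M p \<Longrightarrow> Y \<in> Lp M p \<Longrightarrow> 0 \<le> t \<Longrightarrow> t \<le> 1 \<Longrightarrow>
    f (\<lambda>\<omega>. (1-t) * X \<omega> + t * Y \<omega>) \<le> (1-t) * f X + t * f Y"
  unfolding Lp_convex_def by blast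

text \<open>A bound on a ball around \<open>Z\<close> propagates to every \<open>X\<close>: each \<open>Y\<close> near \<open>X\<close> is the midpoint
  of the fixed point \<open>2X - Z\<close> and a point \<open>Z + 2(Y - X)\<close> of the ball.\<close>
lemma Lp_convex_bounded_near:
  assumes p: "1 \<le> p" and f: "Lp_convex p f" and Z: "Z \<in> Lp M p" and "0 < \<epsilon>"
    and bound: "\<And>Y. Y \<in> Lp M p \<Longrightarrow> Lp_norm M p (\<lambda>\<omega>. Y \<omega> - Z \<omega>) < \<epsilon> \<Longrightarrow> f Y \<le> C"
    and X: "X \<in> Lp M p"
  obtains C' where "\<And>Y. Y \<in> Lp M p \<Longrightarrow> Lp_norm M p (\<lambda>\<omega>. Y \<omega> - X \<omega>) < \<epsilon>/2 \<Longrightarrow> f Y \<le> C'"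
proof
  define W where "W \<omega> = 2 * X \<omega> + (-1) * Z \<omega>" for \<omega>
  have WL: "W \<in> Lp M p" unfolding W_def by (rule Lp_lincomb[OF p X Z])
  fix Y assume Y: "Y \<in> Lp M p" and near: "Lp_norm M p (\<lambda>\<omega>. Y \<omega> - X \<omega>) < \<epsilon>/2"
  have DL: "(\<lambda>\<omega>. Y \<omega> - X \<omega>) \<in> Lp M p" by (rule Lp_diff[OF p Y X])
  define V where "V \<omega> = Z \<omega> + 2 * (Y \<omega> - X \<omega>)" for \<omega>
  have VL: "V \<in> Lp M p" unfolding V_def using Lp_lincomb[OF p Z DL, of 1 2] by simp
  have "Lp_norm M p (\<lambda>\<omega>. V \<omega> - Z \<omega>) = 2 * Lp_norm M p (\<lambda>\<omega>. Y \<omega> - X \<omega>)"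
    using Lp_norm_scale[OF p DL, of 2] by (simp add: V_def)
  hence "f V \<le> C" using bound[OF VL] near by simp
  have "Y = (\<lambda>\<omega>. (1 - 1/2) * W \<omega> + 1/2 * V \<omega>)" by (auto simp: W_def V_def field_simps)
  hence "f Y \<le> (1 - 1/2) * f W + 1/2 * f V"
    using Lp_convexD[OF f WL VL, of "1/2"] by simp
  thus "f Y \<le> f W / 2 + C / 2" using \<open>f V \<le> C\<close> by simp
qed

text \<open>The classical argument: with \<open>f \<le> C\<close> on a ball of radius \<open>r\<close> around \<open>X\<close>, write a nearby \<open>Y\<close>
  and its reflection \<open>2X - Y\<close> as convex combinations \<open>(1-s) X + s K\<close> with \<open>K\<close> in that ball.\<close>
lemma Lp_convex_continuous_at:
  assumes p: "1 \<le> p" and f: "Lp_convex p f" and X: "X \<in> Lp M p" and "0 < r"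
    and bound: "\<And>Y. Y \<in> Lp M p \<Longrightarrow> Lp_norm M p (\<lambda>\<omega>. Y \<omega> - X \<omega>) < r \<Longrightarrow> f Y \<le> C"
    and "0 < \<eta>"
  obtains \<delta> where "0 < \<delta>"
    "\<And>Y. Y \<in> Lp M p \<Longrightarrow> Lp_norm M p (\<lambda>\<omega>. Y \<omega> - X \<omega>) < \<delta> \<Longrightarrow> \<bar>f Y - f X\<bar> < \<eta>"
proof
  define D where "D = C - f X"
  have "0 \<le> D" using bound[OF X] \<open>0 < r\<close> by (simp add: D_def Lp_norm_zero)
  define s where "s = min 1 (\<eta> / (D + 1))"
  have s: "0 < s" "s \<le> 1" using \<open>0 < \<eta>\<close> \<open>0 \<le> D\<close> by (auto simp: s_def)
  have "s * D \<le> \<eta> / (D + 1) * D" using \<open>0 \<le> D\<close> by (intro mult_right_mono) (auto simp: s_def)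
  also have "\<dots> < \<eta>" using \<open>0 \<le> D\<close> \<open>0 < \<eta>\<close> by (simp add: field_simps)
  finally have "s * D < \<eta>" .
  show "0 < s * r" using s \<open>0 < r\<close> by simp
  fix Y assume Y: "Y \<in> Lp M p" and near: "Lp_norm M p (\<lambda>\<omega>. Y \<omega> - X \<omega>) < s * r"
  have DL: "(\<lambda>\<omega>. Y \<omega> - X \<omega>) \<in> Lp M p" by (rule Lp_diff[OF p Y X])
  have step: "f (\<lambda>\<omega>. (1-s) * X \<omega> + s * (X \<omega> + (c/s) * (Y \<omega> - X \<omega>))) \<le> f X + s * D"
    if "\<bar>c\<bar> = 1" for c
  proof -
    define K where "K \<omega> = X \<omega> + (c/s) * (Y \<omega> - X \<omega>)" for \<omega>
    have KL: "K \<in> Lp M p" unfolding K_def using Lp_lincomb[OF p X DL, of 1 "c/s"] by simp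
    have "Lp_norm M p (\<lambda>\<omega>. K \<omega> - X \<omega>) = (1/s) * Lp_norm M p (\<lambda>\<omega>. Y \<omega> - X \<omega>)"
      using Lp_norm_scale[OF p DL, of "c/s"] that s by (simp add: K_def)
    also have "\<dots> < r" using near s by (simp add: field_simps)
    finally have "f K \<le> C" by (rule bound[OF KL])
    have "f (\<lambda>\<omega>. (1-s) * X \<omega> + s * K \<omega>) \<le> (1-s) * f X + s * f K"
      by (rule Lp_convexD[OF f X KL]) (use s in auto)
    also have "\<dots> \<le> f X + s * D"
      using \<open>f K \<le> C\<close> s by (simp add: D_def algebra_simps mult_left_mono)
    finally show ?thesis by (simp add: K_def)
  qed
  have "(\<lambda>\<omega>. (1-s) * X \<omega> + s * (X \<omega> + (1/s) * (Y \<omega> - X \<omega>))) = Y"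
    using s by (auto simp: field_simps)
  hence upper: "f Y \<le> f X + s * D" using step[of 1] by simp
  define Y' where "Y' \<omega> = 2 * X \<omega> + (-1) * Y \<omega>" for \<omega>
  have Y'L: "Y' \<in> Lp M p" unfolding Y'_def by (rule Lp_lincomb[OF p X Y])
  have "(\<lambda>\<omega>. (1-s) * X \<omega> + s * (X \<omega> + (-1/s) * (Y \<omega> - X \<omega>))) = Y'"
    using s by (auto simp: Y'_def field_simps)
  hence "f Y' \<le> f X + s * D" using step[of "-1"] by simp
  moreover have "X = (\<lambda>\<omega>. (1 - 1/2) * Y \<omega> + 1/2 * Y' \<omega>)" by (auto simp: Y'_def field_simps)
  hence "f X \<le> f Y / 2 + f Y' / 2"
    using Lp_convexD[OF f Y Y'L, of "1/2"] by simp
  ultimately show "\<bar>f Y - f X\<bar> < \<eta>" unfolding abs_less_iff using upper \<open>s * D < \<eta>\<close> by linarith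
qed

lemma Lp_convex_bounded_imp_continuous:
  assumes p: "1 \<le> p" and f: "Lp_convex p f" and Z: "Z \<in> Lp M p" and "0 < \<epsilon>"
    and bound: "\<And>Y. Y \<in> Lp M p \<Longrightarrow> Lp_norm M p (\<lambda>\<omega>. Y \<omega> - Z \<omega>) < \<epsilon> \<Longrightarrow> f Y \<le> C"
    and X: "X \<in> Lp M p" and "0 < \<eta>"
  shows "\<exists>\<delta>>0. \<forall>Y\<in>Lp M p. Lp_norm M p (\<lambda>\<omega>. Y \<omega> - X \<omega>) < \<delta> \<longrightarrow> \<bar>f Y - f X\<bar> < \<eta>"
proof -
  obtain C' where "\<And>Y. Y \<in> Lp M p \<Longrightarrow> Lp_norm M p (\<lambda>\<omega>. Y \<omega> - X \<omega>) < \<epsilon>/2 \<Longrightarrow> f Y \<le> C'"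
    using Lp_convex_bounded_near[OF p f Z \<open>0 < \<epsilon>\<close> bound X] by blast
  moreover have "0 < \<epsilon>/2" using \<open>0 < \<epsilon>\<close> by simp
  ultimately obtain \<delta> where "0 < \<delta>"
    "\<And>Y. Y \<in> Lp M p \<Longrightarrow> Lp_norm M p (\<lambda>\<omega>. Y \<omega> - X \<omega>) < \<delta> \<Longrightarrow> \<bar>f Y - f X\<bar> < \<eta>"
    using Lp_convex_continuous_at[OF p f X _ _ \<open>0 < \<eta>\<close>] by blast
  thus ?thesis by blast
qed

lemma Lp_continuous_eq_if_eq_on_Linf:
  assumes p: "1 \<le> p" and cont: "Lp_continuous M p f" "Lp_continuous M p g"
    and fin: "finite_valued_on (Lp M p) f" "finite_valued_on (Lp M p) g"
    and eq: "\<And>Y. Y \<in> Linf M \<Longrightarrow> f Y = g Y" and X: "X \<in> Lp M p"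
  shows "f X = g X"
proof -
  have close: "\<bar>real_of_ereal (f X) - real_of_ereal (g X)\<bar> < \<eta>" if "0 < \<eta>" for \<eta>
  proof -
    obtain d1 where "0 < d1" and d1: "\<forall>Y\<in>Lp M p. Lp_norm M p (\<lambda>\<omega>. Y \<omega> - X \<omega>) < d1 \<longrightarrow>
        \<bar>real_of_ereal (f Y) - real_of_ereal (f X)\<bar> < \<eta>/2"
      using cont(1) X \<open>0 < \<eta>\<close> unfolding Lp_continuous_def by (meson half_gt_zero)
    obtain d2 where "0 < d2" and d2: "\<forall>Y\<in>Lp M p. Lp_norm M p (\<lambda>\<omega>. Y \<omega> - X \<omega>) < d2 \<longrightarrow>
        \<bar>real_of_ereal (g Y) - real_of_ereal (g X)\<bar> < \<eta>/2"
      using cont(2) X \<open>0 < \<eta>\<close> unfolding Lp_continuous_def by (meson half_gt_zero)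
    obtain Y where Y: "Y \<in> Linf M" and "Lp_norm M p (\<lambda>\<omega>. X \<omega> - Y \<omega>) < min d1 d2"
      using Linf_dense_in_Lp[OF p X, of "min d1 d2"] \<open>0 < d1\<close> \<open>0 < d2\<close> by auto
    hence near: "Lp_norm M p (\<lambda>\<omega>. Y \<omega> - X \<omega>) < min d1 d2"
      using Lp_norm_diff_commute[of p X Y] by simp
    have "Y \<in> Lp M p" using Linf_imp_Lp[OF p Y] .
    hence "\<bar>real_of_ereal (f Y) - real_of_ereal (f X)\<bar> < \<eta>/2"
      "\<bar>real_of_ereal (f Y) - real_of_ereal (g X)\<bar> < \<eta>/2"
      using d1 d2 near eq[OF Y] by auto
    thus ?thesis by linarith
  qed
  have "real_of_ereal (f X) = real_of_ereal (g X)"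
  proof (rule ccontr)
    assume "real_of_ereal (f X) \<noteq> real_of_ereal (g X)"
    thus False using close[of "\<bar>real_of_ereal (f X) - real_of_ereal (g X)\<bar>"] by simp
  qed
  thus ?thesis using fin X by (cases "f X"; cases "g X") (auto simp: finite_valued_on_def)
qed

end

subsection \<open>Cash-additive risk measures\<close>

lemma rho_le_ereal: "(\<lambda>\<omega>. X \<omega> + m / S0 * ST \<omega>) \<in> B \<Longrightarrow> rho B S0 ST X \<le> ereal m"
  unfolding rho_def by (rule Inf_lower) blast

lemma rho_less_ereal_imp: "rho B S0 ST X < ereal m \<Longrightarrow> \<exists>m'<m. (\<lambda>\<omega>. X \<omega> + m' / S0 * ST \<omega>) \<in> B"
  unfolding rho_def by (auto simp: Inf_less_iff)

lemma ereal_le_rho: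
  "(\<And>m. (\<lambda>\<omega>. X \<omega> + m / S0 * ST \<omega>) \<in> B \<Longrightarrow> c \<le> m) \<Longrightarrow> ereal c \<le> rho B S0 ST X"
  unfolding rho_def by (rule Inf_greatest) auto

locale utility_risk = prob_space M for M :: "'a measure" +
  fixes p :: real and u :: "real \<Rightarrow> real" and K \<alpha> S0 :: real and ST :: "'a \<Rightarrow> real"
  assumes p: "1 \<le> p" and U: "utility u" and K: "\<And>x. u x \<le> K" and S0: "0 < S0"
    and ST_Linf: "ST \<in> Linf M" and ST_nonneg: "AE \<omega> in M. 0 \<le> ST \<omega>"
    and rho_Linf_finite: "finite_valued_on (Linf M) (rho (util_accept M u \<alpha> (Linf M)) S0 ST)"
begin

abbreviation "A_inf \<equiv> util_accept M u \<alpha> (Linf M)"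
abbreviation "A_p \<equiv> util_accept M u \<alpha> (Lp M p)"
abbreviation shift :: "('a \<Rightarrow> real) \<Rightarrow> real \<Rightarrow> 'a \<Rightarrow> real" where
  "shift X m \<equiv> \<lambda>\<omega>. X \<omega> + m / S0 * ST \<omega>"

lemma A_inf_subset_A_p: "A_inf \<subseteq> A_p"
  using Linf_imp_Lp[OF p] by (auto simp: util_accept_def)

lemma Linf_shift: "X \<in> Linf M \<Longrightarrow> shift X m \<in> Linf M"
  using Linf_lincomb[OF _ ST_Linf, of X 1 "m/S0"] by simp

lemma Lp_shift: "X \<in> Lp M p \<Longrightarrow> shift X m \<in> Lp M p"
  using Lp_lincomb[OF p _ Linf_imp_Lp[OF p ST_Linf], of X 1 "m/S0"] by simp

lemma shift_mem_util_accept_mono: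
  assumes "shift X m' \<in> util_accept M u \<alpha> P" "m' \<le> m"
    and "shift X m \<in> P" "shift X m \<in> borel_measurable M"
  shows "shift X m \<in> util_accept M u \<alpha> P"
proof (rule util_accept_upward[OF U K assms(1,3,4)])
  show "AE \<omega> in M. shift X m' \<omega> \<le> shift X m \<omega>"
    using ST_nonneg by eventually_elim (use S0 \<open>m' \<le> m\<close> in \<open>auto intro!: mult_right_mono divide_right_mono\<close>)
qed

lemma shift_mem_A_p_if_rho_less:
  assumes "X \<in> Lp M p" "rho A_p S0 ST X < ereal m"
  shows "shift X m \<in> A_p"
proof -
  obtain m' where "m' < m" "shift X m' \<in> A_p" using rho_less_ereal_imp[OF assms(2)] by blast
  moreover have "shift X m \<in> Lp M p" by (rule Lp_shift[OF assms(1)])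
  ultimately show ?thesis
    using shift_mem_util_accept_mono[of X m' _ m] Lp_borel_measurable by auto
qed

lemma shift_mem_A_inf_if_rho_less:
  assumes "X \<in> Linf M" "rho A_inf S0 ST X < ereal m"
  shows "shift X m \<in> A_inf"
proof -
  obtain m' where "m' < m" "shift X m' \<in> A_inf" using rho_less_ereal_imp[OF assms(2)] by blast
  moreover have "shift X m \<in> Linf M" by (rule Linf_shift[OF assms(1)])
  ultimately show ?thesis
    using shift_mem_util_accept_mono[of X m' _ m] by (auto simp: Linf_def)
qed

lemma rho_A_p_eq_rho_A_inf: "X \<in> Linf M \<Longrightarrow> rho A_p S0 ST X = rho A_inf S0 ST X"
  unfolding rho_def using Linf_shift Linf_imp_Lp[OF p] by (auto simp: util_accept_def)

lemma A_inf_shift_exists: "X \<in> Linf M \<Longrightarrow> \<exists>m. shift X m \<in> A_inf"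
proof -
  assume X: "X \<in> Linf M"
  hence "\<bar>rho A_inf S0 ST X\<bar> \<noteq> \<infinity>" using rho_Linf_finite by (auto simp: finite_valued_on_def)
  hence "rho A_inf S0 ST X < ereal (real_of_ereal (rho A_inf S0 ST X) + 1)"
    by (cases "rho A_inf S0 ST X") auto
  thus ?thesis using shift_mem_A_inf_if_rho_less[OF X] by blast
qed

lemma A_p_convex:
  assumes "X \<in> A_p" "Y \<in> A_p" "0 \<le> t" "t \<le> 1"
  shows "(\<lambda>\<omega>. (1-t) * X \<omega> + t * Y \<omega>) \<in> A_p"
proof -
  have "X \<in> Lp M p" "Y \<in> Lp M p" using assms by (auto simp: util_accept_def)
  thus ?thesis
    by (intro util_accept_convex[OF U K assms] Lp_lincomb[OF p] Lp_borel_measurable)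
qed

text \<open>If every shift of \<open>X\<close> and some shift of \<open>-X\<close> were acceptable, their midpoints would make every
  shift of \<open>0\<close> acceptable, i.e. \<open>\<rho>(0) = -\<infinity>\<close>.\<close>
lemma shift_not_mem_A_p:
  assumes "shift (\<lambda>\<omega>. - X \<omega>) m' \<in> A_p"
  shows "\<exists>m. shift X m \<notin> A_p"
proof (rule ccontr)
  assume "\<not> ?thesis"
  hence all: "\<And>m. shift X m \<in> A_p" by blast
  have "shift (\<lambda>_. 0) m \<in> A_inf" for m
  proof -
    have "(\<lambda>\<omega>. (1-1/2) * shift X (2*m - m') \<omega> + 1/2 * shift (\<lambda>\<omega>. - X \<omega>) m' \<omega>) \<in> A_p"
      by (rule A_p_convex[OF all assms]) auto
    moreover have "(\<lambda>\<omega>. (1-1/2) * shift X (2*m - m') \<omega> + 1/2 * shift (\<lambda>\<omega>. - X \<omega>) m' \<omega>)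
        = shift (\<lambda>_. 0) m"
      using S0 by (auto simp: field_simps)
    ultimately have "shift (\<lambda>_. 0) m \<in> A_p" by (simp only:)
    thus ?thesis using Linf_shift[OF Linf_const[of 0], of m] by (simp add: util_accept_def)
  qed
  hence "rho A_inf S0 ST (\<lambda>_. 0) \<le> ereal m" for m by (rule rho_le_ereal)
  hence "rho A_inf S0 ST (\<lambda>_. 0) = -\<infinity>" by (meson ereal_bot)
  thus False using rho_Linf_finite Linf_const[of 0 M] by (auto simp: finite_valued_on_def)
qed

lemma interior_A_p_contains_Linf_ball:
  assumes "Lp_interior M p A_p \<noteq> {}"
  obtains Z \<epsilon> where "Z \<in> Linf M" "0 < \<epsilon>"
    "\<And>Y. Y \<in> Lp M p \<Longrightarrow> Lp_norm M p (\<lambda>\<omega>. Y \<omega> - Z \<omega>) < \<epsilon> \<Longrightarrow> Y \<in> A_p"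
proof -
  obtain Z0 \<epsilon> where Z0: "Z0 \<in> Lp M p" and "0 < \<epsilon>"
    and ball: "\<And>Y. Y \<in> Lp M p \<Longrightarrow> Lp_norm M p (\<lambda>\<omega>. Y \<omega> - Z0 \<omega>) < \<epsilon> \<Longrightarrow> Y \<in> A_p"
    using assms by (auto simp: Lp_interior_def)
  obtain Z where Z: "Z \<in> Linf M" and "Lp_norm M p (\<lambda>\<omega>. Z0 \<omega> - Z \<omega>) < \<epsilon>/2"
    using Linf_dense_in_Lp[OF p Z0, of "\<epsilon>/2"] \<open>0 < \<epsilon>\<close> by auto
  hence ZZ0: "Lp_norm M p (\<lambda>\<omega>. Z \<omega> - Z0 \<omega>) < \<epsilon>/2" using Lp_norm_diff_commute[of p Z0 Z] by simp
  show ?thesis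
  proof (rule that[OF Z])
    fix Y assume Y: "Y \<in> Lp M p" and "Lp_norm M p (\<lambda>\<omega>. Y \<omega> - Z \<omega>) < \<epsilon>/2"
    hence "Lp_norm M p (\<lambda>\<omega>. Y \<omega> - Z0 \<omega>) < \<epsilon>"
      using Lp_norm_diff_triangle[OF p Y Linf_imp_Lp[OF p Z] Z0] ZZ0 by simp
    thus "Y \<in> A_p" by (rule ball[OF Y])
  qed (use \<open>0 < \<epsilon>\<close> in simp)
qed

context
  fixes Z \<epsilon> assumes Z: "Z \<in> Linf M" and "0 < \<epsilon>"
    and ball: "\<And>Y. Y \<in> Lp M p \<Longrightarrow> Lp_norm M p (\<lambda>\<omega>. Y \<omega> - Z \<omega>) < \<epsilon> \<Longrightarrow> Y \<in> A_p"
begin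

text \<open>\<open>X\<close> is the midpoint of a point \<open>Z + 2(X - B)\<close> of the ball and of \<open>2B - Z\<close>, where \<open>B \<in> L\<^sup>\<infinity>\<close>
  is close to \<open>X\<close>; the latter has an acceptable shift by finiteness of \<open>\<rho>\<close> on \<open>L\<^sup>\<infinity>\<close>.\<close>
lemma A_p_shift_exists:
  assumes X: "X \<in> Lp M p"
  shows "\<exists>m. shift X m \<in> A_p"
proof -
  obtain B where B: "B \<in> Linf M" and "Lp_norm M p (\<lambda>\<omega>. X \<omega> - B \<omega>) < \<epsilon>/2"
    using Linf_dense_in_Lp[OF p X, of "\<epsilon>/2"] \<open>0 < \<epsilon>\<close> by auto
  have BL: "B \<in> Lp M p" and ZL: "Z \<in> Lp M p" using Linf_imp_Lp[OF p] B Z by auto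
  have DL: "(\<lambda>\<omega>. X \<omega> - B \<omega>) \<in> Lp M p" by (rule Lp_diff[OF p X BL])
  define V where "V \<omega> = Z \<omega> + 2 * (X \<omega> - B \<omega>)" for \<omega>
  have VL: "V \<in> Lp M p" unfolding V_def using Lp_lincomb[OF p ZL DL, of 1 2] by simp
  have "Lp_norm M p (\<lambda>\<omega>. V \<omega> - Z \<omega>) = 2 * Lp_norm M p (\<lambda>\<omega>. X \<omega> - B \<omega>)"
    using Lp_norm_scale[OF p DL, of 2] by (simp add: V_def)
  hence V: "V \<in> A_p" using ball[OF VL] \<open>Lp_norm M p (\<lambda>\<omega>. X \<omega> - B \<omega>) < \<epsilon>/2\<close> by simp
  define W where "W \<omega> = 2 * B \<omega> + (-1) * Z \<omega>" for \<omega>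
  have "W \<in> Linf M" unfolding W_def by (rule Linf_lincomb[OF B Z])
  then obtain m where "shift W m \<in> A_inf" using A_inf_shift_exists by blast
  hence "(\<lambda>\<omega>. (1 - 1/2) * V \<omega> + 1/2 * shift W m \<omega>) \<in> A_p"
    using A_inf_subset_A_p by (intro A_p_convex[OF V]) auto
  moreover have "(\<lambda>\<omega>. (1 - 1/2) * V \<omega> + 1/2 * shift W m \<omega>) = shift X (m/2)"
    using S0 by (auto simp: V_def W_def field_simps)
  ultimately have "shift X (m/2) \<in> A_p" by (simp only:)
  thus ?thesis by blast
qed

lemma rho_A_p_finite: "X \<in> Lp M p \<Longrightarrow> \<bar>rho A_p S0 ST X\<bar> \<noteq> \<infinity>"
proof -
  assume X: "X \<in> Lp M p"
  obtain m1 where "shift X m1 \<in> A_p" using A_p_shift_exists[OF X] by blast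
  hence upper: "rho A_p S0 ST X \<le> ereal m1" by (rule rho_le_ereal)
  obtain m2 where "shift (\<lambda>\<omega>. - X \<omega>) m2 \<in> A_p"
    using A_p_shift_exists[OF Lp_scale[OF p X, of "-1"]] by auto
  then obtain m0 where m0: "shift X m0 \<notin> A_p" using shift_not_mem_A_p by blast
  have "ereal m0 \<le> rho A_p S0 ST X"
  proof (rule ereal_le_rho)
    fix m assume "shift X m \<in> A_p"
    show "m0 \<le> m"
    proof (rule ccontr)
      assume "\<not> m0 \<le> m"
      hence "shift X m0 \<in> A_p"
        using shift_mem_util_accept_mono[of X m "Lp M p" m0] \<open>shift X m \<in> A_p\<close>
          Lp_shift[OF X] Lp_borel_measurable[OF Lp_shift[OF X]] by auto
      thus False using m0 by blast
    qed
  qed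
  thus ?thesis using upper by auto
qed

abbreviation rho_p :: "('a \<Rightarrow> real) \<Rightarrow> real" where
  "rho_p X \<equiv> real_of_ereal (rho A_p S0 ST X)"

lemma rho_p_le: "X \<in> Lp M p \<Longrightarrow> shift X m \<in> A_p \<Longrightarrow> rho_p X \<le> m"
  using rho_le_ereal[of X m S0 ST A_p] rho_A_p_finite[of X] by (cases "rho A_p S0 ST X") auto

lemma shift_mem_A_p_if_rho_p_less: "X \<in> Lp M p \<Longrightarrow> rho_p X < m \<Longrightarrow> shift X m \<in> A_p"
  using shift_mem_A_p_if_rho_less[of X m] rho_A_p_finite[of X] by (cases "rho A_p S0 ST X") auto

lemma Lp_convex_rho_p: "Lp_convex p rho_p"
  unfolding Lp_convex_def
proof (intro ballI allI impI)
  fix X Y and t :: real assume X: "X \<in> Lp M p" and Y: "Y \<in> Lp M p" and t: "0 \<le> t" "t \<le> 1"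
  show "rho_p (\<lambda>\<omega>. (1-t) * X \<omega> + t * Y \<omega>) \<le> (1-t) * rho_p X + t * rho_p Y"
  proof (rule field_le_epsilon)
    fix \<eta> :: real assume "0 < \<eta>"
    have "(\<lambda>\<omega>. (1-t) * shift X (rho_p X + \<eta>) \<omega> + t * shift Y (rho_p Y + \<eta>) \<omega>) \<in> A_p"
      using shift_mem_A_p_if_rho_p_less[OF X, of "rho_p X + \<eta>"]
        shift_mem_A_p_if_rho_p_less[OF Y, of "rho_p Y + \<eta>"] \<open>0 < \<eta>\<close>
      by (intro A_p_convex t) auto
    moreover have "(\<lambda>\<omega>. (1-t) * shift X (rho_p X + \<eta>) \<omega> + t * shift Y (rho_p Y + \<eta>) \<omega>)
        = shift (\<lambda>\<omega>. (1-t) * X \<omega> + t * Y \<omega>) ((1-t) * rho_p X + t * rho_p Y + \<eta>)"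
      using S0 by (auto simp: field_simps)
    ultimately show "rho_p (\<lambda>\<omega>. (1-t) * X \<omega> + t * Y \<omega>) \<le> (1-t) * rho_p X + t * rho_p Y + \<eta>"
      using rho_p_le[OF Lp_lincomb[OF p X Y]] by simp
  qed
qed

lemma Lp_continuous_rho_A_p: "Lp_continuous M p (rho A_p S0 ST)"
proof -
  have "rho_p Y \<le> 0" if "Y \<in> Lp M p" "Lp_norm M p (\<lambda>\<omega>. Y \<omega> - Z \<omega>) < \<epsilon>" for Y
    using rho_p_le[OF that(1), of 0] ball[OF that] by simp
  from Lp_convex_bounded_imp_continuous[OF p Lp_convex_rho_p Linf_imp_Lp[OF p Z] \<open>0 < \<epsilon>\<close> this]
  show ?thesis unfolding Lp_continuous_def by blast
qed

end

lemma A_p_is_Lp_extension: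
  assumes "Lp_interior M p A_p \<noteq> {}"
  shows "is_Lp_extension M p S0 ST A_p (rho A_inf S0 ST)"
proof (rule interior_A_p_contains_Linf_ball[OF assms])
  fix Z \<epsilon> assume "Z \<in> Linf M" "0 < \<epsilon>"
    "\<And>Y. Y \<in> Lp M p \<Longrightarrow> Lp_norm M p (\<lambda>\<omega>. Y \<omega> - Z \<omega>) < \<epsilon> \<Longrightarrow> Y \<in> A_p"
  note ball = this
  have sub: "A_p \<subseteq> Lp M p" by (auto simp: util_accept_def)
  have fin: "finite_valued_on (Lp M p) (rho A_p S0 ST)"
    unfolding finite_valued_on_def by (intro ballI rho_A_p_finite[OF ball])
  show ?thesis unfolding is_Lp_extension_def
    by (intro conjI ballI sub fin Lp_continuous_rho_A_p[OF ball] rho_A_p_eq_rho_A_inf)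
qed

lemma Lp_extension_unique:
  assumes "Lp_interior M p A_p \<noteq> {}" and B: "is_Lp_extension M p S0 ST B (rho A_inf S0 ST)"
    and X: "X \<in> Lp M p"
  shows "rho B S0 ST X = rho A_p S0 ST X"
proof (rule Lp_continuous_eq_if_eq_on_Linf[OF p _ _ _ _ _ X])
  note A = A_p_is_Lp_extension[OF assms(1)]
  show "Lp_continuous M p (rho B S0 ST)" "Lp_continuous M p (rho A_p S0 ST)"
    "finite_valued_on (Lp M p) (rho B S0 ST)" "finite_valued_on (Lp M p) (rho A_p S0 ST)"
    using A B unfolding is_Lp_extension_def by simp_all
  show "rho B S0 ST Y = rho A_p S0 ST Y" if "Y \<in> Linf M" for Y
    using A B that unfolding is_Lp_extension_def by simp
qed

text \<open>Near \<open>X\<^sub>0 = (m + 1)/S\<^sub>0 \<cdot> S\<^sub>T\<close>, where \<open>\<rho>(X\<^sub>0) \<le> -1\<close>, a continuous extension stays negative;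
  so every bounded position there is acceptable, and by part (i) the whole ball lies in \<open>A_p\<close>.\<close>
lemma interior_A_p_nonempty_if_Lp_extension:
  assumes x0: "\<alpha> < u x\<^sub>0" and B: "is_Lp_extension M p S0 ST B (rho A_inf S0 ST)"
  shows "Lp_interior M p A_p \<noteq> {}"
proof -
  obtain m where "shift (\<lambda>_. 0) m \<in> A_inf" using A_inf_shift_exists[OF Linf_const] by blast
  define X0 where "X0 = shift (\<lambda>_. 0) (m + 1)"
  have X0: "X0 \<in> Linf M" unfolding X0_def by (rule Linf_shift[OF Linf_const])
  have X0L: "X0 \<in> Lp M p" using Linf_imp_Lp[OF p X0] .
  have "shift X0 (-1) = shift (\<lambda>_. 0) m" using S0 by (auto simp: X0_def field_simps)
  hence "shift X0 (-1) \<in> A_inf" using \<open>shift (\<lambda>_. 0) m \<in> A_inf\<close> by (simp only:)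
  hence "rho A_inf S0 ST X0 \<le> ereal (-1)" by (rule rho_le_ereal)
  moreover have eqB: "\<And>Y. Y \<in> Linf M \<Longrightarrow> rho B S0 ST Y = rho A_inf S0 ST Y"
    and finB: "\<And>Y. Y \<in> Lp M p \<Longrightarrow> \<bar>rho B S0 ST Y\<bar> \<noteq> \<infinity>"
    and contB: "Lp_continuous M p (rho B S0 ST)"
    using B unfolding is_Lp_extension_def finite_valued_on_def by simp_all
  ultimately have "real_of_ereal (rho B S0 ST X0) \<le> -1"
    using X0 finB[OF X0L] by (cases "rho B S0 ST X0") auto
  from contB[unfolded Lp_continuous_def, rule_format, OF X0L zero_less_one]
  obtain \<delta> where "0 < \<delta>" and \<delta>: "\<forall>Y\<in>Lp M p. Lp_norm M p (\<lambda>\<omega>. Y \<omega> - X0 \<omega>) < \<delta> \<longrightarrow>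
      \<bar>real_of_ereal (rho B S0 ST Y) - real_of_ereal (rho B S0 ST X0)\<bar> < 1"
    by blast
  have negative: "rho B S0 ST Y < ereal 0" if "Y \<in> Lp M p" "Lp_norm M p (\<lambda>\<omega>. Y \<omega> - X0 \<omega>) < \<delta>" for Y
  proof -
    have "real_of_ereal (rho B S0 ST Y) < 0"
      using \<delta> that \<open>real_of_ereal (rho B S0 ST X0) \<le> -1\<close> by fastforce
    thus ?thesis using finB[OF that(1)] by (cases "rho B S0 ST Y") auto
  qed
  have in_closure: "Y \<in> Lp_closure M p A_inf"
    if Y: "Y \<in> Lp M p" and near: "Lp_norm M p (\<lambda>\<omega>. Y \<omega> - X0 \<omega>) < \<delta>" for Y
    unfolding Lp_closure_def
  proof (intro CollectI conjI allI impI Y)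
    fix \<gamma> :: real assume "0 < \<gamma>"
    have "0 < min \<gamma> (\<delta> - Lp_norm M p (\<lambda>\<omega>. Y \<omega> - X0 \<omega>))" using \<open>0 < \<gamma>\<close> near by simp
    then obtain Y' where Y': "Y' \<in> Linf M"
      and "Lp_norm M p (\<lambda>\<omega>. Y \<omega> - Y' \<omega>) < min \<gamma> (\<delta> - Lp_norm M p (\<lambda>\<omega>. Y \<omega> - X0 \<omega>))"
      by (rule Linf_dense_in_Lp[OF p Y])
    hence YY': "Lp_norm M p (\<lambda>\<omega>. Y \<omega> - Y' \<omega>) < \<gamma>"
      and "Lp_norm M p (\<lambda>\<omega>. Y' \<omega> - Y \<omega>) + Lp_norm M p (\<lambda>\<omega>. Y \<omega> - X0 \<omega>) < \<delta>"
      using Lp_norm_diff_commute[of p Y Y'] by auto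
    hence "Lp_norm M p (\<lambda>\<omega>. Y' \<omega> - X0 \<omega>) < \<delta>"
      using Lp_norm_diff_triangle[OF p Linf_imp_Lp[OF p Y'] Y X0L] by simp
    hence "rho A_inf S0 ST Y' < ereal 0"
      using negative[OF Linf_imp_Lp[OF p Y']] eqB[OF Y'] by simp
    hence "shift Y' 0 \<in> A_inf" by (rule shift_mem_A_inf_if_rho_less[OF Y'])
    hence "Y' \<in> A_inf" by simp
    thus "\<exists>Y'\<in>A_inf. Lp_norm M p (\<lambda>\<omega>. Y \<omega> - Y' \<omega>) < \<gamma>" using YY' by blast
  qed
  hence ball: "Y \<in> A_p" if "Y \<in> Lp M p" "Lp_norm M p (\<lambda>\<omega>. Y \<omega> - X0 \<omega>) < \<delta>" for Y
    using that Lp_closure_util_accept_Linf[OF p U K x0] by blast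
  hence "X0 \<in> A_p" using X0L \<open>0 < \<delta>\<close> by (simp add: Lp_norm_zero)
  hence "X0 \<in> Lp_interior M p A_p"
    unfolding Lp_interior_def using ball X0L \<open>0 < \<delta>\<close> by blast
  thus ?thesis by blast
qed

end

theorem theorem6p6:
  fixes M :: "'a measure" and u :: "real \<Rightarrow> real" and \<alpha> p S0 :: real
    and ST :: "'a \<Rightarrow> real"
  assumes "prob_space M" and "nonatomic M"
    and "utility u" and "\<exists>K. \<forall>x. u x \<le> K" and "\<exists>x. u x > \<alpha>"
    and "1 \<le> p"
  shows "Lp_closure M p (util_accept M u \<alpha> (Linf M)) = util_accept M u \<alpha> (Lp M p)
    \<and> ((traded_asset M S0 ST \<and> ST \<in> Linf M \<and>
         finite_valued_on (Linf M) (rho (util_accept M u \<alpha> (Linf M)) S0 ST)) \<longrightarrow>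
        ((\<exists>B. is_Lp_extension M p S0 ST B (rho (util_accept M u \<alpha> (Linf M)) S0 ST))
           \<longleftrightarrow> Lp_interior M p (util_accept M u \<alpha> (Lp M p)) \<noteq> {})
        \<and> (Lp_interior M p (util_accept M u \<alpha> (Lp M p)) \<noteq> {} \<longrightarrow>
             is_Lp_extension M p S0 ST (util_accept M u \<alpha> (Lp M p))
               (rho (util_accept M u \<alpha> (Linf M)) S0 ST)
           \<and> (\<forall>B. is_Lp_extension M p S0 ST B (rho (util_accept M u \<alpha> (Linf M)) S0 ST) \<longrightarrow>
                (\<forall>X\<in>Lp M p. rho B S0 ST X = rho (util_accept M u \<alpha> (Lp M p)) S0 ST X))))"
proof (intro conjI impI)
  obtain K where K: "\<And>x. u x \<le> K" using assms(4) by auto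
  obtain x\<^sub>0 where x0: "\<alpha> < u x\<^sub>0" using assms(5) by auto
  show "Lp_closure M p (util_accept M u \<alpha> (Linf M)) = util_accept M u \<alpha> (Lp M p)"
    by (rule prob_space.Lp_closure_util_accept_Linf[OF assms(1,6,3) K x0])
  assume "traded_asset M S0 ST \<and> ST \<in> Linf M \<and>
    finite_valued_on (Linf M) (rho (util_accept M u \<alpha> (Linf M)) S0 ST)"
  then interpret utility_risk M p u K \<alpha> S0 ST
    by (intro utility_risk.intro[OF assms(1)] utility_risk_axioms.intro assms(3,6) K)
       (auto simp: traded_asset_def)
  show "(\<exists>B. is_Lp_extension M p S0 ST B (rho A_inf S0 ST)) \<longleftrightarrow> Lp_interior M p A_p \<noteq> {}"
    using interior_A_p_nonempty_if_Lp_extension[OF x0] A_p_is_Lp_extension by auto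
  show "Lp_interior M p A_p \<noteq> {} \<Longrightarrow> is_Lp_extension M p S0 ST A_p (rho A_inf S0 ST)"
    by (rule A_p_is_Lp_extension)
  show "Lp_interior M p A_p \<noteq> {} \<Longrightarrow>
      \<forall>B. is_Lp_extension M p S0 ST B (rho A_inf S0 ST) \<longrightarrow> (\<forall>X\<in>Lp M p. rho B S0 ST X = rho A_p S0 ST X)"
    using Lp_extension_unique by simp
qed

end
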